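(* Let $a=\frac{1+\sqrt{5}}{2}$ and $b=a^2=a+1$, and write $a_n=[an]$ and $b_n=[bn]$. Then the series $$\sum_{n=1}^\infty \left(\frac{a_{n+1}}{a_n}-\frac{b_{n+1}}{b_n}\right)$$ converges.
   Context: $[x]$ denotes the greatest integer not exceeding $x$. *)

theory Defs
  imports Complex_Main
begin

end

theory Submission
  imports Defs "HOL-Analysis.Summation_Tests"
begin

text \<open>
  Since \<open>b = a + 1\<close>, both sequences are governed by the fractional parts
  \<open>e\<^sub>m = frac (a m)\<close>: \<open>a\<^sub>m = a m - e\<^sub>m\<close> and \<open>b\<^sub>m = a\<^sub>m + m\<close>. Clearing denominators,
  the \<open>m\<close>-th term equals \<open>(m (e\<^sub>m - e\<^sub>m\<^sub>+\<^sub>1) + e\<^sub>m) / (a\<^sub>m b\<^sub>m)\<close>, and as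
  \<open>a\<^sub>m b\<^sub>m = a b m\<^sup>2 + O(m)\<close> this is \<open>(e\<^sub>m/m - e\<^sub>m\<^sub>+\<^sub>1/(m+1)) / (a b) + O(1/m\<^sup>2)\<close>:
  a telescoping series with vanishing terms plus an absolutely convergent one.
\<close>

lemma golden_ratio_square: "((1 + sqrt 5) / 2 :: real)\<^sup>2 = (1 + sqrt 5) / 2 + 1"
  by (simp add: power2_eq_square algebra_simps)

lemma floor_add_one_mult_of_nat: "\<lfloor>(x + 1) * real k\<rfloor> = \<lfloor>x * real k\<rfloor> + int k"
proof -
  have "(x + 1) * real k = x * real k + of_int (int k)"
    by (simp add: distrib_right)
  then show ?thesis
    by (simp only: floor_add_int)
qed

lemma of_nat_le_floor_mult:
  assumes "x \<ge> 1"
  shows "real k \<le> of_int \<lfloor>x * real k\<rfloor>"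
proof -
  have "real k \<le> x * real k"
    using mult_right_mono[OF assms, of "real k"] by simp
  then show ?thesis
    by (metis floor_mono floor_of_nat of_int_of_nat_eq of_int_le_iff)
qed

lemma bounded_over_Suc_tendsto_zero:
  fixes x :: "nat \<Rightarrow> real"
  assumes "\<And>n. \<bar>x n\<bar> \<le> C"
  shows "(\<lambda>n. x n / real (Suc n)) \<longlonglongrightarrow> 0"
proof (rule tendsto_sandwich[of "\<lambda>n. - C / real (Suc n)" _ _ "\<lambda>n. C / real (Suc n)"])
  have "(\<lambda>n. C * inverse (real (Suc n))) \<longlonglongrightarrow> C * 0"
    by (intro tendsto_mult tendsto_const LIMSEQ_inverse_real_of_nat)
  then show "(\<lambda>n. C / real (Suc n)) \<longlonglongrightarrow> 0" and "(\<lambda>n. - C / real (Suc n)) \<longlonglongrightarrow> 0"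
    using tendsto_minus[of "\<lambda>n. C / real (Suc n)" 0] by (simp_all add: divide_inverse)
  have "- C \<le> x n" "x n \<le> C" for n
    using assms[of n] by (simp_all add: abs_le_iff)
  then show "\<forall>\<^sub>F n in sequentially. - C / real (Suc n) \<le> x n / real (Suc n)"
    and "\<forall>\<^sub>F n in sequentially. x n / real (Suc n) \<le> C / real (Suc n)"
    by (intro always_eventually allI divide_right_mono; simp)+
qed

lemma summable_if_close_to_telescoping:
  fixes f T :: "nat \<Rightarrow> 'a::banach" and h :: "nat \<Rightarrow> real"
  assumes "T \<longlonglongrightarrow> c" and "summable h"
    and "\<And>n. norm (f n - (T n - T (Suc n))) \<le> h n"
  shows "summable f"
proof -
  have "summable (\<lambda>n. f n - (T n - T (Suc n)))"
    using assms(2,3) by (rule summable_comparison_test'[where N = 0])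
  moreover have "summable (\<lambda>n. T n - T (Suc n))"
    using assms(1) by (rule telescope_summable')
  ultimately have "summable (\<lambda>n. (f n - (T n - T (Suc n))) + (T n - T (Suc n)))"
    by (rule summable_add)
  then show ?thesis
    by simp
qed

lemma beatty_product_deviation:
  fixes a m e :: real
  assumes "a \<ge> 0" "m \<ge> 1" "0 \<le> e" "e < 1"
  shows "\<bar>a * (a + 1) * m\<^sup>2 - (a * m - e) * (a * m - e + m)\<bar> \<le> 2 * (a + 1) * m"
proof -
  have expand: "a * (a + 1) * m\<^sup>2 - (a * m - e) * (a * m - e + m) = e * ((2 * a + 1) * m) - e\<^sup>2"
    by (simp add: power2_eq_square algebra_simps)
  have "e * ((2 * a + 1) * m) \<le> (2 * a + 1) * m"
    using assms by (intro mult_left_le_one_le) auto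
  moreover have "0 \<le> e * ((2 * a + 1) * m)" and "0 \<le> e\<^sup>2" and "e\<^sup>2 \<le> 1"
    using assms by (auto simp: power_le_one)
  moreover have "(2 * a + 1) * m + m = 2 * (a + 1) * m"
    by (simp add: algebra_simps)
  ultimately show ?thesis
    unfolding expand abs_le_iff using assms by linarith
qed

lemma beatty_ratio_difference_estimate:
  fixes a m e e' A A' :: real
  assumes a: "a \<ge> 1" and m: "m \<ge> 1"
    and e: "0 \<le> e" "e < 1" and e': "0 \<le> e'" "e' < 1"
    and A: "A = a * m - e" and A': "A' = a * (m + 1) - e'" and A_ge: "m \<le> A"
  shows "\<bar>A' / A - (A' + m + 1) / (A + m) - (e / m - e' / (m + 1)) / (a * (a + 1))\<bar>
           \<le> 3 / m\<^sup>2"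
proof -
  define c where "c = 1 / (a * (a + 1))"
  define P where "P = A * (A + m)"
  have "1 * 2 \<le> a * (a + 1)"
    using a by (intro mult_mono) auto
  then have ab: "2 \<le> a * (a + 1)"
    by simp
  then have c: "0 < c" "c \<le> 1"
    by (simp_all add: c_def)
  have "m * (2 * m) \<le> A * (A + m)"
    using A_ge m by (intro mult_mono) auto
  then have P_ge: "2 * m\<^sup>2 \<le> P"
    by (simp add: P_def power2_eq_square)
  moreover have "0 < 2 * m\<^sup>2"
    using m by simp
  ultimately have P: "0 < P"
    by linarith
  have quotients: "A' / A - (A' + m + 1) / (A + m) = (m * (e - e') + e) / P"
    using A_ge m unfolding P_def A' by (simp add: field_simps A)
  have decomposition:
    "A' / A - (A' + m + 1) / (A + m) - (e / m - e' / (m + 1)) / (a * (a + 1))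
       = (e - e') * (m / P - c / m) + e / P - c * e' / (m * (m + 1))"
  proof -
    have "(e / m - e' / (m + 1)) / (a * (a + 1)) = c * (e / m - e' / (m + 1))"
      by (simp add: c_def)
    moreover have "(m * (e - e') + e) / P - c * (e / m - e' / (m + 1))
        = (e - e') * (m / P - c / m) + e / P - c * e' / (m * (m + 1))"
      using P m by (simp add: divide_simps) (simp add: algebra_simps)
    ultimately show ?thesis
      unfolding quotients by simp
  qed
  have "a * (a + 1) \<noteq> 0" "m \<noteq> 0" "P \<noteq> 0"
    using ab m P by auto
  then have "m / P - c / m = (a * (a + 1) * m\<^sup>2 - P) / (a * (a + 1) * m * P)"
    unfolding c_def by (simp add: divide_simps power2_eq_square)
  then have "\<bar>m / P - c / m\<bar> = \<bar>a * (a + 1) * m\<^sup>2 - P\<bar> / (a * (a + 1) * m * P)"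
    using a m P by (simp add: abs_mult)
  also have "\<dots> \<le> (2 * (a + 1) * m) / (a * (a + 1) * m * (2 * m\<^sup>2))"
    using beatty_product_deviation[of a m e] a m e P P_ge unfolding P_def A
    by (intro frac_le mult_left_mono) auto
  also have "\<dots> = 1 / (a * m\<^sup>2)"
    using a m by (simp add: divide_simps power2_eq_square)
  also have "\<dots> \<le> 1 / m\<^sup>2"
    using a m by (intro divide_left_mono) auto
  finally have "\<bar>(e - e') * (m / P - c / m)\<bar> \<le> 1 * (1 / m\<^sup>2)"
    unfolding abs_mult using e e' by (intro mult_mono) auto
  moreover have "\<bar>e / P\<bar> \<le> 1 / m\<^sup>2"
    using e P P_ge m by (simp add: frac_le)
  moreover have "\<bar>c * e' / (m * (m + 1))\<bar> \<le> 1 / m\<^sup>2"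
    using c e' m
    by (simp add: abs_mult power2_eq_square frac_le mult_le_one mult_mono)
  ultimately show ?thesis
    unfolding decomposition abs_le_iff by linarith
qed

lemma floor_ratio_difference_estimate:
  fixes a :: real and m :: nat
  assumes a: "a \<ge> 1" and m: "m \<ge> 1"
  shows "\<bar>of_int \<lfloor>a * real (m + 1)\<rfloor> / of_int \<lfloor>a * real m\<rfloor>
            - of_int \<lfloor>(a + 1) * real (m + 1)\<rfloor> / of_int \<lfloor>(a + 1) * real m\<rfloor>
            - (frac (a * real m) / real m - frac (a * real (m + 1)) / real (m + 1)) / (a * (a + 1))\<bar>
         \<le> 3 / (real m)\<^sup>2"
proof -
  have "\<bar>of_int \<lfloor>a * real (m + 1)\<rfloor> / of_int \<lfloor>a * real m\<rfloor>
      - (of_int \<lfloor>a * real (m + 1)\<rfloor> + real m + 1) / (of_int \<lfloor>a * real m\<rfloor> + real m)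
      - (frac (a * real m) / real m - frac (a * real (m + 1)) / (real m + 1)) / (a * (a + 1))\<bar>
      \<le> 3 / (real m)\<^sup>2"
    using a m of_nat_le_floor_mult[OF a, of m]
    by (intro beatty_ratio_difference_estimate frac_ge_0 frac_lt_1) (auto simp: frac_def algebra_simps)
  then show ?thesis
    unfolding floor_add_one_mult_of_nat by (simp add: add_ac)
qed

theorem theorem1:
  fixes a b :: real and an bn :: "nat \<Rightarrow> real"
  assumes "a = (1 + sqrt 5) / 2"
    and "b = a\<^sup>2"
    and "\<And>n. an n = of_int \<lfloor>a * real n\<rfloor>"
    and "\<And>n. bn n = of_int \<lfloor>b * real n\<rfloor>"
  shows "summable (\<lambda>n. an (n + 2) / an (n + 1) - bn (n + 2) / bn (n + 1))"
proof -
  have b: "b = a + 1"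
    unfolding assms(1,2) by (rule golden_ratio_square)
  have a: "a \<ge> 1"
    unfolding assms(1) by simp
  define T where "T n = frac (a * real (Suc n)) / real (Suc n) / (a * b)" for n
  show ?thesis
  proof (rule summable_if_close_to_telescoping)
    have "(\<lambda>n. frac (a * real (Suc n)) / real (Suc n)) \<longlonglongrightarrow> 0"
      by (intro bounded_over_Suc_tendsto_zero[where C = 1]) (simp add: less_imp_le[OF frac_lt_1])
    then show "T \<longlonglongrightarrow> 0"
      unfolding T_def by (rule tendsto_divide_zero)
    show "summable (\<lambda>n. 3 / (real (Suc n))\<^sup>2)"
      using summable_mult[OF inverse_power_summable[of 2, where 'a = real], of 3]
      by (subst summable_Suc_iff) (simp add: divide_inverse)
    show "norm (an (n + 2) / an (n + 1) - bn (n + 2) / bn (n + 1) - (T n - T (Suc n)))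
            \<le> 3 / (real (Suc n))\<^sup>2" for n
      using floor_ratio_difference_estimate[OF a, of "Suc n"]
      by (simp add: assms(3,4) T_def b numeral_2_eq_2 diff_divide_distrib)
  qed
qed

end
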